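(* Let $p$ be a positive integer, let $\lambda$ be a partition all of whose parts are multiples of $p$, and let $\lambda^c$ be the conjugate partition of $\lambda$. Then every maximal run of consecutive integers contained in the set $\beta(\lambda^c)$ has length divisible by $p$.
   Context: For a partition $\mu$, its $\beta$-set $\beta(\mu)$ is the set of hook lengths of the boxes in the first column of the Young diagram of $\mu$, where the hook length of a box is the number of boxes consisting of the box itself, the boxes directly to its right, and the boxes directly below it. Equivalently, if $\mu=(\mu_1,\dots,\mu_m)$ with $\mu_m>0$, then $\beta(\mu)=\{\mu_i+m-i : 1\le i\le m\}$. A maximal run of consecutive integers in a set $S\subseteq\mathbb{Z}$ is a set $\{a,a+1,\dots,b\}\subseteq S$ with $a-1\notin S$ and $b+1\notin S$; its length is $b-a+1$. *)

theory Defs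
  imports Main
begin

definition is_partition :: "nat list \<Rightarrow> bool" where
  "is_partition mu \<longleftrightarrow> sorted_wrt (\<ge>) mu \<and> (\<forall>x\<in>set mu. 0 < x)"

definition conj_part :: "nat list \<Rightarrow> nat list" where
  "conj_part mu = map (\<lambda>j. length (filter (\<lambda>x. j \<le> x) mu)) [1..<Suc (if mu = [] then 0 else hd mu)]"

text \<open>beta-set: beta(mu) = {mu_i + m - i : 1 <= i <= m}, with 0-based index k = i - 1.\<close>
definition beta_set :: "nat list \<Rightarrow> int set" where
  "beta_set mu = {int (mu ! k) + int (length mu) - int (k + 1) | k. k < length mu}"

definition maximal_run :: "int set \<Rightarrow> int \<Rightarrow> int \<Rightarrow> bool" where
  "maximal_run S a b \<longleftrightarrow> a \<le> b \<and> {a..b} \<subseteq> S \<and> a - 1 \<notin> S \<and> b + 1 \<notin> S"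

end

theory Submission
  imports Defs
begin

text \<open>If all parts of \<open>\<lambda>\<close> are multiples of \<open>p\<close>, the conjugate \<open>\<lambda>\<^sup>c\<close> has length a multiple
  of \<open>p\<close> and is constant on consecutive blocks of \<open>p\<close> entries. On such a block the hook lengths
  \<open>\<lambda>\<^sup>c\<^sub>i + m - i\<close> form \<open>p\<close> consecutive integers, and because \<open>\<lambda>\<^sup>c\<close> is weakly decreasing,
  distinct blocks start at least \<open>p\<close> apart. So \<open>\<beta>(\<lambda>\<^sup>c)\<close> is a union of intervals of length \<open>p\<close>
  which at most touch, and every maximal run is a concatenation of whole blocks.\<close>

lemma block_start_after_block_start:
  fixes T :: "int set"
  assumes S: "S = (\<Union>t\<in>T. {t..t + int p - 1})"
    and sep: "\<forall>t1\<in>T. \<forall>t2\<in>T. t1 < t2 \<longrightarrow> t1 + int p \<le> t2"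
    and "a \<in> T" "a + int p \<in> S"
  shows "a + int p \<in> T"
proof -
  obtain t where "t \<in> T" "t \<le> a + int p" "a + int p \<le> t + int p - 1"
    using S \<open>a + int p \<in> S\<close> by auto
  with sep \<open>a \<in> T\<close> have "t = a + int p" by force
  with \<open>t \<in> T\<close> show ?thesis by simp
qed

lemma run_from_block_start_dvd:
  fixes T :: "int set"
  assumes S: "S = (\<Union>t\<in>T. {t..t + int p - 1})"
    and sep: "\<forall>t1\<in>T. \<forall>t2\<in>T. t1 < t2 \<longrightarrow> t1 + int p \<le> t2"
    and "0 < p" "a \<in> T" "a \<le> b" "{a..b} \<subseteq> S" "b + 1 \<notin> S"
  shows "int p dvd (b - a + 1)"
  using assms(4-)
proof (induction "nat (b - a)" arbitrary: a rule: less_induct)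
  case less
  have block: "{a..a + int p - 1} \<subseteq> S" using S \<open>a \<in> T\<close> by blast
  consider "b < a + int p - 1" | "b = a + int p - 1" | "a + int p \<le> b" by linarith
  then show ?case
  proof cases
    case 1
    with block \<open>a \<le> b\<close> have "b + 1 \<in> S" by auto
    with \<open>b + 1 \<notin> S\<close> show ?thesis by contradiction
  next
    case 2
    then show ?thesis by simp
  next
    case 3
    with \<open>{a..b} \<subseteq> S\<close> \<open>0 < p\<close> have "a + int p \<in> S" by auto
    with S sep \<open>a \<in> T\<close> have "a + int p \<in> T" by (rule block_start_after_block_start)
    moreover have "nat (b - (a + int p)) < nat (b - a)" using 3 \<open>0 < p\<close> by auto
    moreover have "{a + int p..b} \<subseteq> S" using \<open>{a..b} \<subseteq> S\<close> by auto
    ultimately have "int p dvd (b - (a + int p) + 1)"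
      using less.hyps 3 \<open>b + 1 \<notin> S\<close> by blast
    then have "int p dvd (b - (a + int p) + 1) + int p" by (rule dvd_add) simp
    moreover have "b - (a + int p) + 1 + int p = b - a + 1" by simp
    ultimately show ?thesis by metis
  qed
qed

lemma maximal_run_separated_blocks_dvd:
  fixes T :: "int set"
  assumes S: "S = (\<Union>t\<in>T. {t..t + int p - 1})"
    and sep: "\<forall>t1\<in>T. \<forall>t2\<in>T. t1 < t2 \<longrightarrow> t1 + int p \<le> t2"
    and "0 < p" "maximal_run S a b"
  shows "int p dvd (b - a + 1)"
proof -
  from \<open>maximal_run S a b\<close> have run: "a \<le> b" "{a..b} \<subseteq> S" "a - 1 \<notin> S" "b + 1 \<notin> S"
    unfolding maximal_run_def by auto
  then obtain t where "t \<in> T" "t \<le> a" "a \<le> t + int p - 1"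
    using S by auto
  moreover from this S run(3) have "t = a" by force
  ultimately show ?thesis
    using run_from_block_start_dvd[OF S sep \<open>0 < p\<close>] run by blast
qed

lemma mult_add_less_mult:
  fixes s m r p :: nat
  assumes "s < m" "r < p"
  shows "s * p + r < m * p"
proof -
  have "Suc s * p \<le> m * p" using \<open>s < m\<close> by (intro mult_le_mono1) simp
  with \<open>r < p\<close> show ?thesis by simp
qed

definition beta_block_start :: "nat list \<Rightarrow> nat \<Rightarrow> nat \<Rightarrow> int" where
  "beta_block_start mu p s = int (mu ! (s * p)) + int (length mu) - int (Suc s * p)"

lemma beta_set_blockwise_constant:
  assumes len: "length mu = m * p"
    and const: "\<And>s r. s < m \<Longrightarrow> r < p \<Longrightarrow> mu ! (s * p + r) = mu ! (s * p)"
  shows "beta_set mu =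
    (\<Union>s<m. {beta_block_start mu p s..beta_block_start mu p s + int p - 1})"
    (is "_ = (\<Union>s<m. ?block s)")
proof (rule set_eqI)
  fix y
  show "y \<in> beta_set mu \<longleftrightarrow> y \<in> (\<Union>s<m. ?block s)"
  proof
    assume "y \<in> beta_set mu"
    then obtain k where k: "k < m * p" and y: "y = int (mu ! k) + int (m * p) - int (k + 1)"
      unfolding beta_set_def len by auto
    define s r where "s = k div p" and "r = k mod p"
    have "0 < p" using k by (cases p) auto
    then have kd: "k = s * p + r" and "r < p" and "s < m"
      using k by (auto simp: s_def r_def less_mult_imp_div_less)
    then have "y = beta_block_start mu p s + int p - 1 - int r"
      using const y len by (simp add: beta_block_start_def)
    with \<open>r < p\<close> have "y \<in> ?block s" by auto
    with \<open>s < m\<close> show "y \<in> (\<Union>s<m. ?block s)" by blast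
  next
    assume "y \<in> (\<Union>s<m. ?block s)"
    then obtain s where "s < m" and y: "y \<in> ?block s" by auto
    define r where "r = nat (beta_block_start mu p s + int p - 1 - y)"
    have "r < p" using y by (auto simp: r_def)
    have "s * p + r < m * p" using \<open>s < m\<close> \<open>r < p\<close> by (rule mult_add_less_mult)
    moreover have "y = int (mu ! (s * p + r)) + int (length mu) - int (s * p + r + 1)"
      using const[OF \<open>s < m\<close> \<open>r < p\<close>] y by (auto simp: r_def beta_block_start_def)
    ultimately show "y \<in> beta_set mu"
      unfolding beta_set_def len by blast
  qed
qed

lemma beta_block_start_decreasing:
  assumes "sorted_wrt (\<ge>) mu" "length mu = m * p" "0 < p" "i < j" "j < m"
  shows "beta_block_start mu p j + int p \<le> beta_block_start mu p i"
proof -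
  have "Suc i * p \<le> j * p" using \<open>i < j\<close> by (simp only: Suc_le_eq[symmetric] mult_le_mono1)
  moreover have "j * p < length mu" using mult_add_less_mult[of j m 0 p] assms(2,3,5) by simp
  moreover have "i * p < j * p" using assms(3,4) by simp
  ultimately have "mu ! (j * p) \<le> mu ! (i * p)"
    using sorted_wrt_nth_less[OF assms(1)] by blast
  moreover have "int p + int i * int p \<le> int j * int p"
    using \<open>Suc i * p \<le> j * p\<close> by (metis of_nat_add of_nat_mult of_nat_mono mult_Suc)
  ultimately show ?thesis by (simp add: beta_block_start_def)
qed

lemma length_filter_mono_pred:
  "(\<And>x. P x \<Longrightarrow> Q x) \<Longrightarrow> length (filter P xs) \<le> length (filter Q xs)"
  by (induction xs) auto

lemma length_conj_part: "lam \<noteq> [] \<Longrightarrow> length (conj_part lam) = hd lam"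
  by (simp add: conj_part_def)

lemma nth_conj_part:
  assumes "lam \<noteq> []" "k < hd lam"
  shows "conj_part lam ! k = length (filter (\<lambda>x. k < x) lam)"
proof -
  have "(\<lambda>x. Suc k \<le> x) = (\<lambda>x. k < x)" by (simp add: Suc_le_eq)
  with assms show ?thesis by (simp add: conj_part_def del: upt_Suc)
qed

lemma sorted_conj_part: "sorted_wrt (\<ge>) (conj_part lam)"
proof -
  have "sorted_wrt (<) [1..<n]" for n :: nat by (rule sorted_wrt_upt)
  then show ?thesis
    unfolding conj_part_def sorted_wrt_map
    by (rule sorted_wrt_mono_rel[rotated]) (auto intro: length_filter_mono_pred)
qed

lemma mult_add_less_dvd_iff:
  fixes p x :: nat
  assumes "p dvd x" "r < p"
  shows "s * p + r < x \<longleftrightarrow> s * p < x"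
proof
  assume "s * p < x"
  obtain q where "x = q * p" using \<open>p dvd x\<close> by (metis dvdE mult.commute)
  with \<open>s * p < x\<close> have "Suc s \<le> q" by simp
  then have "Suc s * p \<le> x" unfolding \<open>x = q * p\<close> by (rule mult_le_mono1)
  with \<open>r < p\<close> show "s * p + r < x" by simp
qed simp

lemma conj_part_blockwise_constant:
  assumes "\<forall>x\<in>set lam. p dvd x" "lam \<noteq> []" "s * p + r < hd lam" "r < p"
  shows "conj_part lam ! (s * p + r) = conj_part lam ! (s * p)"
  using assms mult_add_less_dvd_iff[of p _ r s]
  by (simp add: nth_conj_part cong: filter_cong)

lemma beta_set_conj_part_separated_blocks:
  assumes "0 < p" "\<forall>x\<in>set lam. p dvd x"
  obtains T where "beta_set (conj_part lam) = (\<Union>t\<in>T. {t..t + int p - 1})"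
    and "\<forall>t1\<in>T. \<forall>t2\<in>T. t1 < t2 \<longrightarrow> t1 + int p \<le> t2"
proof (cases "lam = []")
  case True
  then have "beta_set (conj_part lam) = (\<Union>t\<in>{}. {t..t + int p - 1})"
    by (simp add: conj_part_def beta_set_def)
  then show ?thesis using that by blast
next
  case False
  then obtain m where "hd lam = m * p" using assms(2) by (metis dvdE hd_in_set mult.commute)
  with False have len: "length (conj_part lam) = m * p" by (simp add: length_conj_part)
  define start where "start = beta_block_start (conj_part lam) p"
  have "beta_set (conj_part lam) = (\<Union>s<m. {start s..start s + int p - 1})"
    unfolding start_def
  proof (rule beta_set_blockwise_constant[OF len])
    fix s r assume "s < m" "r < p"
    then have "s * p + r < hd lam" using \<open>hd lam = m * p\<close> mult_add_less_mult by simp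
    with assms(2) False show "conj_part lam ! (s * p + r) = conj_part lam ! (s * p)"
      using \<open>r < p\<close> by (rule conj_part_blockwise_constant)
  qed
  moreover have "t1 + int p \<le> t2"
    if T: "t1 \<in> start ` {..<m}" "t2 \<in> start ` {..<m}" and "t1 < t2" for t1 t2
  proof -
    obtain i j where "i < m" "j < m" and t: "t1 = start i" "t2 = start j" using T by blast
    have decreasing: "start l + int p \<le> start k" if "k < l" "l < m" for k l
      unfolding start_def using sorted_conj_part len assms(1) that
      by (rule beta_block_start_decreasing)
    consider "j < i" | "i = j" | "i < j" by linarith
    then show ?thesis
    proof cases
      case 1
      then show ?thesis using decreasing[of j i] \<open>i < m\<close> t by simp
    next
      case 2
      then show ?thesis using t \<open>t1 < t2\<close> by simp
    next
      case 3
      then show ?thesis using decreasing[of i j] \<open>j < m\<close> t \<open>t1 < t2\<close> assms(1) by simp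
    qed
  qed
  ultimately show ?thesis using that[of "start ` {..<m}"] by simp
qed

theorem lemma3p3:
  fixes p :: nat and lam :: "nat list"
  assumes "0 < p"
    and "is_partition lam"
    and "\<forall>x\<in>set lam. p dvd x"
  shows "\<forall>a b. maximal_run (beta_set (conj_part lam)) a b \<longrightarrow> int p dvd (b - a + 1)"
proof (intro allI impI)
  fix a b
  assume run: "maximal_run (beta_set (conj_part lam)) a b"
  obtain T where "beta_set (conj_part lam) = (\<Union>t\<in>T. {t..t + int p - 1})"
    and "\<forall>t1\<in>T. \<forall>t2\<in>T. t1 < t2 \<longrightarrow> t1 + int p \<le> t2"
    using assms(1,3) by (rule beta_set_conj_part_separated_blocks)
  from this assms(1) run show "int p dvd (b - a + 1)"
    by (rule maximal_run_separated_blocks_dvd)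
qed

end
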